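(* Let $m,n\in\mathbb{N}$, let $\alpha\in\mathbb{Z}_n$ and let $f:\mathbb{Z}_n\to\mathbb{C}$ be given by $f(x)=\widehat f(\alpha)\chi_{\alpha}(x)$ (a $1$-sparse function). Let $\ell:=\min(n,m)$ and let $g:\mathbb{Z}_m\to\mathbb{C}$ be defined by $g(x)=f(x)$ for $0\le x<\ell$ and $g(x)=0$ otherwise. If $\beta\in\mathbb{Z}_m$ satisfies $\beta=\frac mn\alpha$, then $|\widehat g(\beta)|=\frac\ell m|\widehat f(\alpha)|$. For all $\beta\in\mathbb{Z}_m$ with $\beta\neq\frac mn\alpha$, \[|\widehat g(\beta)|\le|\widehat f(\alpha)|\min\Big(\frac\ell m,\ \frac{1}{2|\frac mn\alpha-\beta|_m}\Big).\] Moreover, if $\beta=\lfloor\frac mn\alpha\rceil$ (taken in $\mathbb{Z}_m$), then \[|\widehat g(\beta)|\ge|\widehat f(\alpha)|\max\Big(\frac{2\ell}{\pi m},\ \frac\ell m\sqrt{1-\frac{\pi^2\ell^2}{3m^2}\Big|\frac mn\alpha-\beta\Big|_m^2}\Big).\]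
   Context: $\mathbb{Z}_n=\{0,\dots,n-1\}$ with addition mod $n$; elements are treated as these integer representatives. $\chi_\alpha(x)=\exp(2\pi i\alpha x/n)$ on $\mathbb{Z}_n$; for $h:\mathbb{Z}_m\to\mathbb{C}$, $\widehat h(\beta)=\frac1m\sum_{x\in\mathbb{Z}_m}h(x)\exp(-2\pi i\beta x/m)$. $\lfloor x\rceil$ denotes the integer nearest to $x\in\mathbb{R}$. For $k\in\mathbb{N}$ and $x\in\mathbb{R}$, $|x|_k=\min\{|x-kz|:z\in\mathbb{Z}\}$. *)

theory Defs
  imports Complex_Main
begin

text \<open>Elements of Z_n are represented by naturals 0..n-1.\<close>

definition chi :: "nat \<Rightarrow> nat \<Rightarrow> nat \<Rightarrow> complex" where
  "chi n \<alpha> x = exp (2 * pi * \<i> * of_nat \<alpha> * of_nat x / of_nat n)"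

definition fourier :: "nat \<Rightarrow> (nat \<Rightarrow> complex) \<Rightarrow> nat \<Rightarrow> complex" where
  "fourier m h \<beta> = (1 / of_nat m) * (\<Sum>x<m. h x * exp (- 2 * pi * \<i> * of_nat \<beta> * of_nat x / of_nat m))"

definition mod_dist :: "nat \<Rightarrow> real \<Rightarrow> real" where
  "mod_dist k x = Inf {\<bar>x - real k * of_int z\<bar> | z. z \<in> (UNIV :: int set)}"

end

theory Submission
  imports Defs "HOL-Analysis.Complex_Transcendental"
begin

text \<open>On its first \<ell> = min n m points f equals c \<chi>_\<alpha>, so the coefficient of g at \<beta> is c/m times
  the geometric sum D = \<Sum>_{k<\<ell>} exp(i k \<theta>) with \<theta> = 2\<pi>(m\<alpha>/n - \<beta>)/m, and
  |D| |sin(\<theta>/2)| = |sin(\<ell>\<theta>/2)|. Shifting \<theta>/2 by a multiple of \<pi> to some t with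
  |t| = \<pi> |m\<alpha>/n - \<beta>|_m / m \<le> \<pi>/2, the upper bound comes from |sin(\<ell>t)| \<le> 1 and Jordan's
  inequality sin |t| \<ge> 2|t|/\<pi>. When \<ell>|t| \<le> \<pi>/2, which holds for the rounded frequency,
  |sin t| \<le> |t| gives |D| \<ge> \<ell> sin y / y with y = \<ell>|t|, and sin y / y is at least 2/\<pi> by Jordan's
  inequality and at least sqrt(1 - y^2/3) by the fifth-order Taylor bound for sin.\<close>

lemma sin_ge_taylor5: "y - y^3/6 - \<bar>y\<bar>^5/120 \<le> sin (y::real)"
proof -
  have "(\<Sum>k<5. sin_coeff k * y ^ k) = y - y^3/6"
    by (simp add: lessThan_nat_numeral sin_coeff_def fact_numeral)
  moreover have "\<bar>sin y - (\<Sum>k<5. sin_coeff k * y ^ k)\<bar> \<le> inverse (fact 5) * \<bar>y\<bar> ^ 5"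
    by (rule Maclaurin_sin_bound)
  ultimately have "\<bar>sin y - (y - y^3/6)\<bar> \<le> \<bar>y\<bar>^5/120"
    by (simp add: fact_numeral)
  then show ?thesis
    by linarith
qed

lemma cos_ge_one_minus_square_half:
  assumes "0 \<le> x" "x \<le> 2*pi"
  shows "1 - x^2/2 \<le> cos (x::real)"
proof -
  have "sin (x/2) \<le> x/2" "0 \<le> sin (x/2)"
    using assms sin_x_le_x[of "x/2"] by (auto intro: sin_ge_zero)
  then have "(sin (x/2))^2 \<le> (x/2)^2"
    by (simp add: power_mono)
  then show ?thesis
    using cos_double_sin[of "x/2"] by (simp add: power_divide)
qed

lemma jordan_inequality:
  assumes "0 \<le> y" "y \<le> pi/2"
  shows "2 * y / pi \<le> sin y"
proof (cases "y \<le> 1")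
  case True
  have "y^5 \<le> y^3" "y^3 \<le> y"
    using True assms power_decreasing[of 1 3 y] by (simp_all add: power_decreasing)
  have "2 * y / pi \<le> 2 * y / 3"
    using assms pi_gt3 by (intro divide_left_mono) auto
  also have "\<dots> \<le> y - y^3/6 - \<bar>y\<bar>^5/120"
    using \<open>y^5 \<le> y^3\<close> \<open>y^3 \<le> y\<close> assms by simp
  also have "\<dots> \<le> sin y"
    by (rule sin_ge_taylor5)
  finally show ?thesis .
next
  case False
  define w where "w = pi/2 - y"
  have w: "0 \<le> w" "w \<le> 1"
    using assms False pi_less_4 by (auto simp: w_def)
  have "2 * y / pi = 1 - 2 * w / pi"
    by (simp add: w_def field_simps)
  also have "\<dots> \<le> 1 - w^2/2"
  proof -
    have "pi * w^2 \<le> 4 * w"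
      using w pi_less_4 mult_left_le[of w w] mult_mono[of pi 4 "w^2" w]
      by (simp add: power2_eq_square)
    then show ?thesis
      by (simp add: field_simps)
  qed
  also have "\<dots> \<le> cos w"
    using w pi_gt3 by (intro cos_ge_one_minus_square_half) auto
  also have "cos w = sin y"
    by (simp add: w_def cos_diff)
  finally show ?thesis .
qed

lemma sqrt_one_minus_square_third_le:
  fixes y :: real
  assumes "0 \<le> y" "y \<le> 2"
  shows "sqrt (1 - y^2/3) \<le> 1 - y^2/6 - y^4/120"
proof -
  define p where "p = y^2/6 + y^4/120"
  have "y^2 \<le> 4" "y^4 \<le> 16"
    using assms power_mono[of y 2 2] power_mono[of y 2 4] by simp_all
  then have p: "0 \<le> p" "p \<le> 1"
    by (auto simp: p_def)
  have "y^4/60 \<le> (y^2/6)^2"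
    by (simp add: power_divide flip: power_mult)
  also have "\<dots> \<le> p^2"
    by (rule power_mono) (auto simp: p_def)
  finally have "1 - y^2/3 \<le> (1 - p)^2"
    by (simp add: p_def power2_eq_square algebra_simps)
  then show ?thesis
    using p real_sqrt_le_mono[of "1 - y^2/3" "(1 - p)^2"] by (simp add: p_def)
qed

lemma sin_ge_mult_sqrt:
  fixes y :: real
  assumes "0 \<le> y" "y \<le> 2"
  shows "y * sqrt (1 - y^2/3) \<le> sin y"
proof -
  have "y * sqrt (1 - y^2/3) \<le> y * (1 - y^2/6 - y^4/120)"
    using assms sqrt_one_minus_square_third_le by (intro mult_left_mono) auto
  also have "\<dots> = y - y^3/6 - \<bar>y\<bar>^5/120"
    using assms by (simp add: algebra_simps eval_nat_numeral)
  also have "\<dots> \<le> sin y"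
    by (rule sin_ge_taylor5)
  finally show ?thesis .
qed

definition dirichlet_sum :: "nat \<Rightarrow> real \<Rightarrow> complex" where
  "dirichlet_sum L \<theta> = (\<Sum>k<L. exp (\<i> * of_real (real k * \<theta>)))"

lemma dirichlet_sum_0 [simp]: "dirichlet_sum L 0 = of_nat L"
  by (simp add: dirichlet_sum_def)

lemma norm_dirichlet_sum_le: "cmod (dirichlet_sum L \<theta>) \<le> L"
proof -
  have "cmod (dirichlet_sum L \<theta>) \<le> (\<Sum>k<L. cmod (exp (\<i> * of_real (real k * \<theta>))))"
    unfolding dirichlet_sum_def by (rule norm_sum)
  also have "\<dots> = L"
    by (simp add: mult.commute[of \<i>])
  finally show ?thesis .
qed

lemma dirichlet_sum_add_2pi_multiple:
  "dirichlet_sum L (\<theta> + 2 * pi * of_int j) = dirichlet_sum L \<theta>"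
proof -
  have "exp (\<i> * of_real (real k * (\<theta> + 2 * pi * of_int j))) = exp (\<i> * of_real (real k * \<theta>))"
    for k
    using exp_plus_2pin[of "\<i> * of_real (real k * \<theta>)" "int k * j"]
    by (simp add: algebra_simps)
  then show ?thesis
    by (simp add: dirichlet_sum_def)
qed

lemma norm_dirichlet_sum_mult_abs_sin:
  "cmod (dirichlet_sum L (2 * t)) * \<bar>sin t\<bar> = \<bar>sin (L * t)\<bar>"
proof -
  define z where "z = exp (\<i> * of_real (2 * t))"
  have powers: "exp (\<i> * of_real (real k * (2 * t))) = z ^ k" for k
    unfolding z_def by (metis exp_of_nat_mult mult.left_commute of_real_mult of_real_of_nat_eq)
  have "dirichlet_sum L (2 * t) = (\<Sum>k<L. z ^ k)"
    unfolding dirichlet_sum_def by (intro sum.cong) (simp_all only: powers)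
  then have "z ^ L - 1 = (z - 1) * dirichlet_sum L (2 * t)"
    by (simp add: power_diff_1_eq)
  moreover have "cmod (z ^ L - 1) = 2 * \<bar>sin (L * t)\<bar>"
    using dist_exp_i_1[of "real L * (2 * t)"] powers[of L] by simp
  moreover have "cmod (z - 1) = 2 * \<bar>sin t\<bar>"
    using dist_exp_i_1[of "2 * t"] by (simp add: z_def)
  ultimately show ?thesis
    by (simp add: norm_mult mult.commute)
qed

lemma norm_dirichlet_sum_le_pi_div:
  assumes "0 < \<bar>t\<bar>" "\<bar>t\<bar> \<le> pi/2"
  shows "cmod (dirichlet_sum L (2 * t)) \<le> pi / (2 * \<bar>t\<bar>)"
proof -
  have "2 * \<bar>t\<bar> / pi \<le> \<bar>sin t\<bar>"
    using jordan_inequality[of "\<bar>t\<bar>"] assms by (cases "t \<ge> 0") auto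
  then have "cmod (dirichlet_sum L (2 * t)) * (2 * \<bar>t\<bar> / pi) \<le> 1"
    using norm_dirichlet_sum_mult_abs_sin[of L t]
    by (metis abs_sin_le_one mult_left_mono norm_ge_zero order_trans)
  then show ?thesis
    using assms by (simp add: field_simps)
qed

lemma norm_dirichlet_sum_ge:
  assumes "L * \<bar>t\<bar> \<le> pi/2"
  shows "max (2 * real L / pi) (L * sqrt (1 - (L * t)^2 / 3)) \<le> cmod (dirichlet_sum L (2 * t))"
proof (cases "t = 0 \<or> L = 0")
  case True
  then show ?thesis
    using pi_gt3 mult_right_mono[of 2 pi "real L"] by (auto simp: field_simps)
next
  case False
  define y where "y = L * \<bar>t\<bar>"
  have y: "0 < y" "y \<le> pi/2"
    using False assms by (auto simp: y_def)
  have "sin y = \<bar>sin (L * t)\<bar>"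
    using y sin_ge_zero[of y] by (cases "t \<ge> 0") (auto simp: y_def)
  also have "\<dots> = cmod (dirichlet_sum L (2 * t)) * \<bar>sin t\<bar>"
    by (rule norm_dirichlet_sum_mult_abs_sin[symmetric])
  also have "\<dots> \<le> cmod (dirichlet_sum L (2 * t)) * \<bar>t\<bar>"
    by (simp add: abs_sin_x_le_abs_x mult_left_mono)
  finally have "L * (sin y / y) \<le> cmod (dirichlet_sum L (2 * t))"
    using False by (simp add: y_def field_simps)
  moreover have "2 / pi \<le> sin y / y" "sqrt (1 - (L * t)^2 / 3) \<le> sin y / y"
    using jordan_inequality[of y] sin_ge_mult_sqrt[of y] y pi_less_4
    by (simp_all add: y_def power_mult_distrib field_simps)
  then have "L * (2 / pi) \<le> L * (sin y / y)" "L * sqrt (1 - (L * t)^2 / 3) \<le> L * (sin y / y)"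
    by (simp_all only: mult_left_mono of_nat_0_le_iff)
  ultimately show ?thesis
    by (simp add: mult.commute[of 2])
qed

lemma mod_dist_nonneg: "0 \<le> mod_dist k x"
  unfolding mod_dist_def by (rule cInf_greatest) auto

lemma mod_dist_eq_abs:
  assumes "0 < m" "\<bar>u\<bar> \<le> real m / 2"
  shows "mod_dist m (u + real m * of_int j) = \<bar>u\<bar>"
  unfolding mod_dist_def
proof (rule cInf_eq_minimum)
  show "\<bar>u\<bar> \<in> {\<bar>u + real m * of_int j - real m * of_int z\<bar> |z. z \<in> UNIV}"
    by (rule CollectI, rule exI[of _ j]) simp
next
  fix x assume "x \<in> {\<bar>u + real m * of_int j - real m * of_int z\<bar> |z. z \<in> UNIV}"
  then obtain z where x: "x = \<bar>u + real m * of_int (j - z)\<bar>"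
    by (auto simp: algebra_simps)
  show "\<bar>u\<bar> \<le> x"
  proof (cases "j = z")
    case False
    then have "real m \<le> \<bar>real m * of_int (j - z)\<bar>"
      using assms(1) by (simp add: abs_mult mult_le_cancel_left1)
    then show ?thesis
      using x assms(2) by linarith
  qed (simp add: x)
qed

lemma mod_dist_decomp:
  assumes "0 < m"
  obtains u j where "X = u + real m * of_int j" "\<bar>u\<bar> \<le> real m / 2" "mod_dist m X = \<bar>u\<bar>"
proof -
  define j where "j = round (X / m)"
  have "\<bar>of_int j - X / m\<bar> \<le> 1/2"
    unfolding j_def by (rule of_int_round_abs_le)
  then have "\<bar>real m * (X / m - of_int j)\<bar> \<le> real m / 2"
    using assms by (simp add: abs_mult abs_minus_commute)
  then have u: "\<bar>X - real m * of_int j\<bar> \<le> real m / 2"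
    using assms by (simp add: right_diff_distrib)
  show thesis
    using mod_dist_eq_abs[OF assms u, of j] by (intro that[of "X - real m * of_int j" j] u) simp_all
qed

lemma dirichlet_sum_reduce_mod:
  assumes "0 < m" "X = u + real m * of_int j"
  shows "dirichlet_sum L (2 * pi * X / m) = dirichlet_sum L (2 * (pi * u / m))"
proof -
  have "2 * pi * X / m = 2 * (pi * u / m) + 2 * pi * of_int j"
    using assms by (simp add: field_simps)
  then show ?thesis
    by (simp only: dirichlet_sum_add_2pi_multiple)
qed

lemma norm_dirichlet_sum_div_le_mod_dist:
  assumes "0 < m" "0 < mod_dist m X"
  shows "cmod (dirichlet_sum L (2 * pi * X / m)) / m \<le> min (L / m) (1 / (2 * mod_dist m X))"
proof -
  obtain u j where X: "X = u + real m * of_int j" and u: "\<bar>u\<bar> \<le> real m / 2"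
    and d: "mod_dist m X = \<bar>u\<bar>"
    using mod_dist_decomp assms(1) by blast
  have "cmod (dirichlet_sum L (2 * (pi * u / m))) \<le> pi / (2 * \<bar>pi * u / m\<bar>)"
    using assms u d by (intro norm_dirichlet_sum_le_pi_div) (auto simp: abs_mult field_simps)
  then have "cmod (dirichlet_sum L (2 * pi * X / m)) \<le> m / (2 * mod_dist m X)"
    unfolding dirichlet_sum_reduce_mod[OF assms(1) X] using assms d by (simp add: abs_mult field_simps)
  then show ?thesis
    using norm_dirichlet_sum_le[of L] assms by (simp add: field_simps)
qed

lemma norm_dirichlet_sum_div_ge_mod_dist:
  assumes "0 < m" "L * mod_dist m X \<le> m / 2"
  shows "max (2 * real L / (pi * real m))
             (real L / real m * sqrt (1 - pi\<^sup>2 * (real L)\<^sup>2 / (3 * (real m)\<^sup>2) * (mod_dist m X)\<^sup>2))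
           \<le> cmod (dirichlet_sum L (2 * pi * X / m)) / m"
proof -
  obtain u j where X: "X = u + real m * of_int j" and d: "mod_dist m X = \<bar>u\<bar>"
    using mod_dist_decomp assms(1) by blast
  have "L * \<bar>pi * u / m\<bar> \<le> pi / 2"
    using assms d by (simp add: abs_mult field_simps)
  then have "max (2 * real L / pi) (L * sqrt (1 - (L * (pi * u / m))\<^sup>2 / 3))
               \<le> cmod (dirichlet_sum L (2 * (pi * u / m)))"
    by (rule norm_dirichlet_sum_ge)
  moreover have "(L * (pi * u / m))\<^sup>2 / 3 = pi\<^sup>2 * (real L)\<^sup>2 / (3 * (real m)\<^sup>2) * (mod_dist m X)\<^sup>2"
    by (simp add: d power_mult_distrib power_divide mult_ac)
  ultimately have "max (2 * real L / pi) (L * sqrt (1 - pi\<^sup>2 * (real L)\<^sup>2 / (3 * (real m)\<^sup>2) * (mod_dist m X)\<^sup>2))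
                     \<le> cmod (dirichlet_sum L (2 * pi * X / m))"
    unfolding dirichlet_sum_reduce_mod[OF assms(1) X] by (simp only:)
  then have "max (2 * real L / pi) (L * sqrt (1 - pi\<^sup>2 * (real L)\<^sup>2 / (3 * (real m)\<^sup>2) * (mod_dist m X)\<^sup>2)) / m
               \<le> cmod (dirichlet_sum L (2 * pi * X / m)) / m"
    by (rule divide_right_mono) simp
  then show ?thesis
    using assms(1) by (simp add: max_divide_distrib_right)
qed

lemma mod_dist_pos:
  assumes "0 < m" "X \<noteq> 0" "\<bar>X\<bar> < real m"
  shows "0 < mod_dist m X"
proof -
  obtain u j where X: "X = u + real m * of_int j" and d: "mod_dist m X = \<bar>u\<bar>"
    using mod_dist_decomp assms(1) by blast
  have "u \<noteq> 0"
  proof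
    assume "u = 0"
    then have "real m * \<bar>of_int j\<bar> < real m * 1"
      using X assms(3) by (simp add: abs_mult)
    then have "j = 0"
      using assms(1) by (simp only: mult_less_cancel_left_pos of_nat_0_less_iff)
    then show False
      using X \<open>u = 0\<close> assms(2) by simp
  qed
  then show ?thesis
    using d by simp
qed

lemma mod_dist_round_le:
  assumes "0 < m"
  shows "mod_dist m (x - real (nat (round x mod int m))) \<le> 1/2"
proof -
  have "real (nat (round x mod int m)) = of_int (round x mod int m)"
    using assms by simp
  also have "\<dots> = of_int (round x) - real m * of_int (round x div int m)"
    by (simp flip: minus_div_mult_eq_mod)
  finally have decomp: "x - real (nat (round x mod int m))
                         = (x - of_int (round x)) + real m * of_int (round x div int m)"
    by simp
  have "\<bar>x - of_int (round x)\<bar> \<le> 1/2"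
    using of_int_round_abs_le[of x] by (simp add: abs_minus_commute)
  moreover have "mod_dist m (x - real (nat (round x mod int m))) = \<bar>x - of_int (round x)\<bar>"
    unfolding decomp using assms calculation by (intro mod_dist_eq_abs) auto
  ultimately show ?thesis
    by simp
qed

lemma fourier_zero_padded_character:
  fixes f g :: "nat \<Rightarrow> complex"
  assumes "0 < m" "L \<le> m"
    and f: "\<forall>x<L. f x = c * chi n \<alpha> x"
    and g: "\<forall>x<m. g x = (if x < L then f x else 0)"
  shows "fourier m g \<beta> = c / m * dirichlet_sum L (2 * pi * (real m / real n * real \<alpha> - real \<beta>) / m)"
proof -
  define E where "E x = exp (- 2 * pi * \<i> * of_nat \<beta> * of_nat x / of_nat m)" for x :: nat
  have phase: "chi n \<alpha> x * E x = exp (\<i> * of_real (real x * (2 * pi * (real m / real n * real \<alpha> - real \<beta>) / m)))"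
    for x
  proof -
    have "chi n \<alpha> x * E x = exp (2 * pi * \<i> * of_nat \<alpha> * of_nat x / of_nat n
                                + - 2 * pi * \<i> * of_nat \<beta> * of_nat x / of_nat m)"
      by (simp only: chi_def E_def exp_add)
    then show ?thesis
      using assms(1) by (simp add: field_simps)
  qed
  have "{x\<in>{..<m}. x < L} = {..<L}"
    using assms(2) by auto
  then have "(\<Sum>x<L. f x * E x) = (\<Sum>x<m. if x < L then f x * E x else 0)"
    using sum.inter_filter[of "{..<m}" "\<lambda>x. f x * E x" "\<lambda>x. x < L"] by simp
  also have "\<dots> = (\<Sum>x<m. g x * E x)"
    using g by (intro sum.cong) auto
  finally have "(\<Sum>x<m. g x * E x) = (\<Sum>x<L. f x * E x)" ..
  also have "\<dots> = c * dirichlet_sum L (2 * pi * (real m / real n * real \<alpha> - real \<beta>) / m)"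
    using f phase by (simp add: dirichlet_sum_def sum_distrib_left mult.assoc)
  finally show ?thesis
    unfolding fourier_def E_def[symmetric] by simp
qed

theorem lemma3p1:
  fixes m n \<alpha> :: nat and f g :: "nat \<Rightarrow> complex"
  assumes "0 < m" and "0 < n" and "\<alpha> < n"
    and f_sparse: "\<forall>x<n. f x = fourier n f \<alpha> * chi n \<alpha> x"
    and g_def: "\<forall>x<m. g x = (if x < min n m then f x else 0)"
  shows
    "(\<forall>\<beta><m. real \<beta> = real m / real n * real \<alpha> \<longrightarrow>
        cmod (fourier m g \<beta>) = real (min n m) / real m * cmod (fourier n f \<alpha>))
   \<and> (\<forall>\<beta><m. real \<beta> \<noteq> real m / real n * real \<alpha> \<longrightarrow>
        cmod (fourier m g \<beta>) \<le> cmod (fourier n f \<alpha>) *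
          min (real (min n m) / real m)
              (1 / (2 * mod_dist m (real m / real n * real \<alpha> - real \<beta>))))
   \<and> (let \<beta> = nat (round (real m / real n * real \<alpha>) mod int m) in
        cmod (fourier m g \<beta>) \<ge> cmod (fourier n f \<alpha>) *
          max (2 * real (min n m) / (pi * real m))
              (real (min n m) / real m *
                sqrt (1 - pi\<^sup>2 * (real (min n m))\<^sup>2 / (3 * (real m)\<^sup>2) *
                       (mod_dist m (real m / real n * real \<alpha> - real \<beta>))\<^sup>2)))"
proof -
  define c where "c = fourier n f \<alpha>"
  define L where "L = min n m"
  define X where "X \<beta> = real m / real n * real \<alpha> - real \<beta>" for \<beta> :: nat
  have norm_g: "cmod (fourier m g \<beta>) = cmod c * (cmod (dirichlet_sum L (2 * pi * X \<beta> / m)) / m)" for \<beta>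
    using fourier_zero_padded_character[of m L f c n \<alpha> g \<beta>] assms
    by (simp add: c_def L_def X_def norm_mult norm_divide)
  have upper: "cmod (fourier m g \<beta>) \<le> cmod c * min (real L / real m) (1 / (2 * mod_dist m (X \<beta>)))"
    if "\<beta> < m" "X \<beta> \<noteq> 0" for \<beta>
  proof -
    have "0 \<le> real m / real n * real \<alpha>" "real m / real n * real \<alpha> < real m" "real \<beta> < real m"
      using assms that by (simp_all add: field_simps)
    then have "\<bar>X \<beta>\<bar> < real m"
      unfolding X_def by linarith
    then have "0 < mod_dist m (X \<beta>)"
      using assms(1) that(2) by (intro mod_dist_pos)
    then show ?thesis
      unfolding norm_g using assms(1) by (intro mult_left_mono norm_dirichlet_sum_div_le_mod_dist) auto
  qed
  define \<beta> where "\<beta> = nat (round (real m / real n * real \<alpha>) mod int m)"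
  have "L * mod_dist m (X \<beta>) \<le> m * (1/2)"
    using mod_dist_round_le[OF assms(1)] mod_dist_nonneg
    by (intro mult_mono) (auto simp: L_def X_def \<beta>_def)
  then have lower: "cmod c * max (2 * real L / (pi * real m))
      (real L / real m * sqrt (1 - pi\<^sup>2 * (real L)\<^sup>2 / (3 * (real m)\<^sup>2) * (mod_dist m (X \<beta>))\<^sup>2))
      \<le> cmod (fourier m g \<beta>)"
    unfolding norm_g using assms(1) by (intro mult_left_mono norm_dirichlet_sum_div_ge_mod_dist) auto
  show ?thesis
    using upper lower unfolding norm_g c_def L_def X_def \<beta>_def Let_def by auto
qed

end
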